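(* Let $\kappa$ be a regular cardinal with $\kappa>\aleph_0$, $\lambda$ a regular cardinal $>2^\kappa$, $S\subseteq\{\delta<\lambda:\mathrm{cf}(\delta)=\kappa\}$ stationary, and $I$ a normal ideal on $\lambda$ with $S\notin I$. If $I$ is $\lambda^+$-saturated, then there is a sequence $\langle C_\delta:\delta\in S\rangle$, each $C_\delta$ a club of $\delta$ of order type $\mathrm{cf}(\delta)$, such that for every club $C$ of $\lambda$ we have $\{\delta\in S:C_\delta\setminus C\text{ is unbounded in }\delta\}\in I$.
   Context: An ideal $I$ on $\lambda$ is $\lambda^+$-saturated if the Boolean algebra $\mathcal P(\lambda)/I$ has no family of $\lambda^+$ pairwise disjoint nonzero elements (i.e. there are no $\lambda^+$ subsets of $\lambda$ not in $I$ whose pairwise intersections are in $I$). *)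

theory Defs
  imports Main "HOL-Library.Countable_Set"
begin

text \<open>Ordinals below lambda are modelled by the elements of a wellorder type 'l,
  whose whole universe has order type lambda. Ordinals below lambda (such as kappa,
  or delta) are elements of 'l, identified with their set of predecessors.\<close>

definition unbounded_below :: "'l::wellorder \<Rightarrow> 'l set \<Rightarrow> bool" where
  "unbounded_below \<delta> X \<longleftrightarrow> X \<subseteq> {..<\<delta>} \<and> (\<forall>\<alpha><\<delta>. \<exists>\<beta>\<in>X. \<alpha> < \<beta>)"

definition accum_pt :: "'l::wellorder \<Rightarrow> 'l set \<Rightarrow> bool" where
  "accum_pt \<gamma> X \<longleftrightarrow> (\<exists>\<beta>\<in>X. \<beta> < \<gamma>) \<and> (\<forall>\<alpha><\<gamma>. \<exists>\<beta>\<in>X. \<alpha> < \<beta> \<and> \<beta> < \<gamma>)"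

definition club_below :: "'l::wellorder \<Rightarrow> 'l set \<Rightarrow> bool" where
  "club_below \<delta> C \<longleftrightarrow> unbounded_below \<delta> C \<and> (\<forall>\<gamma><\<delta>. accum_pt \<gamma> C \<longrightarrow> \<gamma> \<in> C)"

definition club :: "'l::wellorder set \<Rightarrow> bool" where
  "club C \<longleftrightarrow> (\<forall>\<alpha>. \<exists>\<beta>\<in>C. \<alpha> < \<beta>) \<and> (\<forall>\<gamma>. accum_pt \<gamma> C \<longrightarrow> \<gamma> \<in> C)"

definition stationary :: "'l::wellorder set \<Rightarrow> bool" where
  "stationary S \<longleftrightarrow> (\<forall>C. club C \<longrightarrow> S \<inter> C \<noteq> {})"

definition cofinal_in :: "'l::wellorder \<Rightarrow> 'l set \<Rightarrow> bool" where
  "cofinal_in \<delta> X \<longleftrightarrow> X \<subseteq> {..<\<delta>} \<and> (\<forall>\<alpha><\<delta>. \<exists>\<beta>\<in>X. \<alpha> \<le> \<beta>)"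

definition cof_eq :: "'l::wellorder \<Rightarrow> 'l \<Rightarrow> bool" where
  "cof_eq \<delta> \<kappa> \<longleftrightarrow>
     (\<exists>X. cofinal_in \<delta> X \<and> (card_of (X), card_of ({..<\<kappa>})) \<in> ordIso) \<and>
     (\<forall>X. cofinal_in \<delta> X \<longrightarrow> (card_of ({..<\<kappa>}), card_of (X)) \<in> ordLeq)"

definition regular_cardinal_below :: "'l::wellorder \<Rightarrow> bool" where
  "regular_cardinal_below \<kappa> \<longleftrightarrow>
     (\<forall>\<alpha><\<kappa>. (card_of ({..<\<alpha>}), card_of ({..<\<kappa>})) \<in> ordLess) \<and>
     (\<forall>X. cofinal_in \<kappa> X \<longrightarrow> (card_of (X), card_of ({..<\<kappa>})) \<in> ordIso)"

definition regular_cardinal_type :: "'l::wellorder itself \<Rightarrow> bool" where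
  "regular_cardinal_type TYPE('l) \<longleftrightarrow>
     (\<forall>\<alpha>::'l. (card_of ({..<\<alpha>}), card_of (UNIV :: 'l set)) \<in> ordLess) \<and>
     (\<forall>X::'l set. (\<forall>\<alpha>. \<exists>\<beta>\<in>X. \<alpha> \<le> \<beta>) \<longrightarrow> (card_of (X), card_of (UNIV :: 'l set)) \<in> ordIso)"

definition normal_ideal :: "'l::wellorder set set \<Rightarrow> bool" where
  "normal_ideal I \<longleftrightarrow>
     {} \<in> I \<and> UNIV \<notin> I \<and>
     (\<forall>A\<in>I. \<forall>B. B \<subseteq> A \<longrightarrow> B \<in> I) \<and>
     (\<forall>A\<in>I. \<forall>B\<in>I. A \<union> B \<in> I) \<and>
     (\<forall>\<alpha>. {..<\<alpha>} \<in> I) \<and>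
     (\<forall>A :: 'l \<Rightarrow> 'l set. (\<forall>\<alpha>. A \<alpha> \<in> I) \<longrightarrow> {\<beta>. \<exists>\<alpha><\<beta>. \<beta> \<in> A \<alpha>} \<in> I)"

definition saturated_succ :: "'l::wellorder set set \<Rightarrow> bool" where
  "saturated_succ I \<longleftrightarrow>
     (\<forall>F. (\<forall>A\<in>F. A \<notin> I) \<and> (\<forall>A\<in>F. \<forall>B\<in>F. A \<noteq> B \<longrightarrow> A \<inter> B \<in> I)
          \<longrightarrow> (card_of (F), card_of (UNIV :: 'l set)) \<in> ordLeq)"

end

theory Submission
  imports Defs
begin

text \<open>Fix for every \<open>\<delta>\<close> of cofinality \<open>\<kappa>\<close> a monotone, continuous, cofinal \<open>\<kappa>\<close>-sequence
  in \<open>\<delta>\<close>. Projecting it into a club \<open>F\<close> (taking suprema of \<open>F\<close> below its terms) gives a club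
  of \<open>\<delta>\<close> of order type \<open>\<kappa>\<close> inside \<open>F\<close> whenever \<open>\<delta>\<close> is a limit point of \<open>F\<close>.
  Saturation provides for every club \<open>F\<close> a club \<open>\<Phi>(F)\<close> such that, modulo \<open>I\<close>, the set of
  \<open>\<delta>\<close> whose projection into \<open>F\<close> escapes \<open>\<Phi>(F)\<close> is as large as for any other club: an
  \<open>I\<close>-antichain has at most \<open>\<lambda>\<close> members, and \<open>\<lambda>\<close> clubs are combined into one by a
  diagonal intersection. Iterate \<open>F\<^sub>\<zeta> = \<Inter>\<^sub>\<xi>\<^sub><\<^sub>\<zeta> \<Phi>(F\<^sub>\<xi>)\<close> for \<open>\<zeta> \<le> \<kappa>\<^sup>+ < \<lambda>\<close>. At each \<open>\<delta>\<close> the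
  projections into \<open>F\<^sub>\<zeta>\<close> decrease pointwise, so they stabilise at some stage \<open>y < \<kappa>\<^sup>+\<close>;
  the projection into \<open>F\<^sub>y\<close> then lies in \<open>F\<^sub>y\<^sub>+\<^sub>1 \<subseteq> \<Phi>(F\<^sub>y)\<close>, and this is the guess at \<open>\<delta>\<close>.
  A club \<open>C\<close> can then escape the guesses only on the non-limit points of \<open>F\<^sub>\<kappa>\<^sub>+\<close> and on
  fewer than \<open>\<lambda>\<close> sets of the form (escapes \<open>C\<close>) \<open>-\<close> (escapes \<open>\<Phi>(F\<^sub>\<zeta>)\<close>), all in \<open>I\<close>;
  normality of \<open>I\<close> puts their union in \<open>I\<close>.\<close>

section \<open>Suprema and transfinite recursion in a wellorder\<close>

definition lub :: "'l::wellorder set \<Rightarrow> 'l" where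
  "lub X = (LEAST y. \<forall>x\<in>X. x \<le> y)"

lemma lub_upper:
  assumes "\<forall>x\<in>X. x \<le> u" and "x \<in> X"
  shows "x \<le> lub X"
proof -
  have "\<forall>x\<in>X. x \<le> lub X"
    unfolding lub_def using assms(1) by (rule LeastI)
  then show ?thesis using assms(2) ..
qed

lemma lub_least: "\<forall>x\<in>X. x \<le> u \<Longrightarrow> lub X \<le> u"
  unfolding lub_def by (rule Least_le)

lemma less_lubD: "\<forall>x\<in>X. x \<le> u \<Longrightarrow> b < lub X \<Longrightarrow> \<exists>x\<in>X. b < x"
  using lub_least[of X b] by (metis not_le)

lemma lub_mono: "A \<subseteq> B \<Longrightarrow> \<forall>x\<in>B. x \<le> u \<Longrightarrow> lub A \<le> lub B"
  by (rule lub_least) (auto intro: lub_upper)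

lemma lub_empty_le: "lub {} \<le> x"
  unfolding lub_def by (simp add: Least_le)

lemma lub_in_closed:
  assumes closed: "\<forall>\<gamma>. accum_pt \<gamma> F \<longrightarrow> \<gamma> \<in> F" and "x \<in> F" "x < a"
  shows "lub (F \<inter> {..<a}) \<in> F"
proof (rule ccontr)
  let ?X = "F \<inter> {..<a}"
  have ub: "\<forall>y\<in>?X. y \<le> a" by auto
  assume notin: "lub ?X \<notin> F"
  have below: "y < lub ?X" if "y \<in> ?X" for y
  proof -
    have "y \<le> lub ?X" using lub_upper[OF ub that] .
    moreover have "y \<noteq> lub ?X" using notin that by blast
    ultimately show ?thesis by simp
  qed
  have "accum_pt (lub ?X) F"
    unfolding accum_pt_def
  proof (intro conjI allI impI)
    show "\<exists>\<beta>\<in>F. \<beta> < lub ?X" using assms(2,3) below by blast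
    fix \<alpha> assume "\<alpha> < lub ?X"
    then obtain y where "y \<in> ?X" "\<alpha> < y" using less_lubD[OF ub] by blast
    then show "\<exists>\<beta>\<in>F. \<alpha> < \<beta> \<and> \<beta> < lub ?X" using below by blast
  qed
  then show False using closed notin by blast
qed

definition wrec :: "('b set \<Rightarrow> 'l::wellorder \<Rightarrow> 'b) \<Rightarrow> 'l \<Rightarrow> 'b" where
  "wrec H = wfrec {(x,y). x < y} (\<lambda>g i. H (g ` {..<i}) i)"

lemma wrec_eq: "wrec H i = H (wrec H ` {..<i}) i"
proof -
  have "wrec H i = H ((cut (wrec H) {(x,y). x < y} i) ` {..<i}) i"
    unfolding wrec_def by (rule wfrec[OF wellorder_class.wf])
  also have "(cut (wrec H) {(x,y). x < y} i) ` {..<i} = wrec H ` {..<i}"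
    unfolding cut_def by (rule image_cong) auto
  finally show ?thesis .
qed

lemma accum_pt_mono: "A \<subseteq> B \<Longrightarrow> accum_pt \<gamma> A \<Longrightarrow> accum_pt \<gamma> B"
  unfolding accum_pt_def by blast

lemma clubD:
  "club C \<Longrightarrow> \<exists>\<beta>\<in>C. \<alpha> < \<beta>"
  "club C \<Longrightarrow> accum_pt \<gamma> C \<Longrightarrow> \<gamma> \<in> C"
  unfolding club_def by blast+

section \<open>Clubs of a regular uncountable cardinal\<close>

unbundle cardinal_syntax

locale cardinal_setting =
  fixes \<kappa> :: "'l::wellorder"
  assumes lambda_regular: "regular_cardinal_type TYPE('l)"
    and kappa_regular: "regular_cardinal_below \<kappa>"
    and kappa_uncountable: "\<not> countable {..<\<kappa>}"
    and pow_kappa_less_lambda: "|Pow {..<\<kappa>}| <o |UNIV :: 'l set|"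
begin

lemma small_bounded:
  fixes X :: "'l set"
  assumes "|X| <o |UNIV :: 'l set|"
  shows "\<exists>y. \<forall>x\<in>X. x < y"
proof (rule ccontr)
  assume "\<not> ?thesis"
  then have "\<forall>\<alpha>. \<exists>\<beta>\<in>X. \<alpha> \<le> \<beta>" by (auto simp: not_less)
  then have "|X| =o |UNIV :: 'l set|" using lambda_regular unfolding regular_cardinal_type_def by blast
  then show False using assms ordIso_iff_ordLeq not_ordLess_ordLeq by blast
qed

lemma initial_segment_small: "|{..<\<alpha>::'l}| <o |UNIV :: 'l set|"
  using lambda_regular unfolding regular_cardinal_type_def by blast

lemma bounded_if_le_segment: "|X :: 'l set| \<le>o |{..<\<alpha>::'l}| \<Longrightarrow> \<exists>y. \<forall>x\<in>X. x < y"
  using small_bounded ordLeq_ordLess_trans[OF _ initial_segment_small] by blast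

lemma kappa_infinite: "infinite {..<\<kappa>}"
  using kappa_uncountable by (auto intro: countable_finite)

lemma countable_bounded:
  fixes X :: "'l set"
  assumes "countable X"
  shows "\<exists>y. \<forall>x\<in>X. x < y"
proof (rule bounded_if_le_segment)
  have "\<not> |{..<\<kappa>}| \<le>o |UNIV :: nat set|"
    using kappa_uncountable card_of_ordLeq[of "{..<\<kappa>}" "UNIV :: nat set"] by (auto intro: countableI)
  then have "|UNIV :: nat set| \<le>o |{..<\<kappa>}|"
    using not_ordLeq_iff_ordLess[OF card_of_Well_order card_of_Well_order] ordLess_imp_ordLeq
    by blast
  moreover have "|X| \<le>o |UNIV :: nat set|"
    using assms card_of_ordLeq[of X "UNIV :: nat set"] unfolding countable_def by blast
  ultimately show "|X| \<le>o |{..<\<kappa>}|" by (rule ordLeq_transitive[rotated])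
qed

lemma gt_ex: "\<exists>y. (x::'l) < y"
  using countable_bounded[of "{x}"] by auto

lemma club_UNIV: "club (UNIV :: 'l set)"
  unfolding club_def using gt_ex by blast

lemma increasing_seq_lub:
  fixes b :: "nat \<Rightarrow> 'l"
  assumes inc: "\<And>n. b n < b (Suc n)"
  shows "b n < lub (range b)"
    and "\<forall>n\<ge>N. \<exists>e\<in>Z. b n < e \<and> e \<le> b (Suc n) \<Longrightarrow> accum_pt (lub (range b)) Z"
proof -
  obtain u where "\<forall>n. b n < u" using countable_bounded[of "range b"] by blast
  then have ub: "\<forall>x\<in>range b. x \<le> u" by (auto intro: less_imp_le)
  have lt: "b n < lub (range b)" for n
    using inc[of n] lub_upper[OF ub, of "b (Suc n)"] by simp
  then show "b n < lub (range b)" .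
  have mono: "b n \<le> b m" if "n \<le> m" for n m
    using lift_Suc_mono_le[of b n m] inc that by (simp add: less_imp_le)
  assume H: "\<forall>n\<ge>N. \<exists>e\<in>Z. b n < e \<and> e \<le> b (Suc n)"
  show "accum_pt (lub (range b)) Z"
    unfolding accum_pt_def
  proof (intro conjI allI impI)
    obtain e where "e \<in> Z" "e \<le> b (Suc N)" using H by blast
    then show "\<exists>\<beta>\<in>Z. \<beta> < lub (range b)" using lt by (blast intro: le_less_trans)
  next
    fix a assume "a < lub (range b)"
    then obtain n where n: "a < b n" using less_lubD[OF ub] by blast
    obtain e where e: "e \<in> Z" "b (max n N) < e" "e \<le> b (Suc (max n N))"
      using H[rule_format, of "max n N"] by auto
    have "a < e" using n mono[of n "max n N"] e(2) by simp
    moreover have "e < lub (range b)" using e(3) lt by (rule le_less_trans)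
    ultimately show "\<exists>\<beta>\<in>Z. a < \<beta> \<and> \<beta> < lub (range b)" using e(1) by blast
  qed
qed

lemma unbounded_INT_lessThan:
  fixes E :: "'l \<Rightarrow> 'l set"
  assumes clubs: "\<And>\<xi>. \<xi> < \<alpha> \<Longrightarrow> club (E \<xi>)"
  shows "\<exists>\<beta>\<in>(\<Inter>\<xi>\<in>{..<\<alpha>}. E \<xi>). \<beta>0 < \<beta>"
proof -
  have "\<exists>y. x < y \<and> (\<forall>\<xi><\<alpha>. \<exists>e\<in>E \<xi>. x < e \<and> e < y)" for x
  proof -
    define m where "m \<xi> = (LEAST e. e \<in> E \<xi> \<and> x < e)" for \<xi>
    have m: "m \<xi> \<in> E \<xi> \<and> x < m \<xi>" if \<xi>: "\<xi> < \<alpha>" for \<xi>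
    proof -
      obtain e where "e \<in> E \<xi> \<and> x < e" using clubD(1)[OF clubs[OF \<xi>]] by blast
      then show ?thesis unfolding m_def by (rule LeastI)
    qed
    obtain y1 where y1: "\<forall>z\<in>m ` {..<\<alpha>}. z < y1"
      using bounded_if_le_segment card_of_image by blast
    obtain y2 where "x < y2" using gt_ex[of x] by blast
    then show ?thesis using m y1 by (intro exI[of _ "max y1 y2"]) (auto simp: less_max_iff_disj)
  qed
  then obtain nxt where nxt: "x < nxt x \<and> (\<forall>\<xi><\<alpha>. \<exists>e\<in>E \<xi>. x < e \<and> e < nxt x)" for x
    by metis
  define b where "b n = (nxt ^^ n) \<beta>0" for n
  have bSuc: "b (Suc n) = nxt (b n)" for n unfolding b_def by simp
  have inc: "b n < b (Suc n)" for n using nxt bSuc by simp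
  have "lub (range b) \<in> E \<xi>" if \<xi>: "\<xi> < \<alpha>" for \<xi>
  proof -
    have "\<forall>n\<ge>0. \<exists>e\<in>E \<xi>. b n < e \<and> e \<le> b (Suc n)"
    proof (intro allI impI)
      fix n
      obtain e where "e \<in> E \<xi>" "b n < e" "e < nxt (b n)" using nxt[of "b n"] \<xi> by blast
      then show "\<exists>e\<in>E \<xi>. b n < e \<and> e \<le> b (Suc n)" using bSuc by (auto intro: less_imp_le)
    qed
    then show ?thesis using clubD(2)[OF clubs[OF \<xi>]] increasing_seq_lub(2)[of b, OF inc] by blast
  qed
  moreover have "\<beta>0 < lub (range b)" using increasing_seq_lub(1)[of b, OF inc, of 0] by (simp add: b_def)
  ultimately show ?thesis by blast
qed

lemma club_INT_lessThan:
  fixes E :: "'l \<Rightarrow> 'l set"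
  assumes clubs: "\<And>\<xi>. \<xi> < \<alpha> \<Longrightarrow> club (E \<xi>)"
  shows "club (\<Inter>\<xi>\<in>{..<\<alpha>}. E \<xi>)"
  unfolding club_def
proof (intro conjI allI impI)
  show "\<exists>\<beta>\<in>(\<Inter>\<xi>\<in>{..<\<alpha>}. E \<xi>). \<beta>0 < \<beta>" for \<beta>0 using unbounded_INT_lessThan[OF clubs] .
  fix \<gamma> assume "accum_pt \<gamma> (\<Inter>\<xi>\<in>{..<\<alpha>}. E \<xi>)"
  moreover have "(\<Inter>\<xi>\<in>{..<\<alpha>}. E \<xi>) \<subseteq> E \<xi>" if "\<xi> < \<alpha>" for \<xi> using that by blast
  ultimately have "accum_pt \<gamma> (E \<xi>)" if "\<xi> < \<alpha>" for \<xi>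
    using accum_pt_mono that by blast
  then show "\<gamma> \<in> (\<Inter>\<xi>\<in>{..<\<alpha>}. E \<xi>)" using clubD(2)[OF clubs] by blast
qed

text \<open>The diagonal intersection is unbounded: iterate \<open>x \<mapsto>\<close> some point above \<open>x\<close> lying in
  \<open>E i\<close> for all \<open>i \<le> x\<close>; the supremum of the iterates lies in every \<open>E i\<close> below it.\<close>

lemma unbounded_diagonal_Inter:
  fixes E :: "'l \<Rightarrow> 'l set"
  assumes clubs: "\<And>i. club (E i)"
  shows "\<exists>\<beta>\<in>{\<beta>. \<forall>i<\<beta>. \<beta> \<in> E i}. \<beta>0 < \<beta>"
proof -
  have "\<exists>y. x < y \<and> (\<forall>i\<le>x. y \<in> E i)" for x
  proof -
    obtain z where z: "x < z" using gt_ex[of x] by blast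
    obtain y where "y \<in> (\<Inter>\<xi>\<in>{..<z}. E \<xi>)" "x < y"
      using unbounded_INT_lessThan[of z E] clubs by blast
    then show ?thesis using z by (auto dest: le_less_trans)
  qed
  then obtain nxt where nxt: "x < nxt x \<and> (\<forall>i\<le>x. nxt x \<in> E i)" for x
    by metis
  define b where "b n = (nxt ^^ n) \<beta>0" for n
  have bSuc: "b (Suc n) = nxt (b n)" for n unfolding b_def by simp
  have inc: "b n < b (Suc n)" for n using nxt bSuc by simp
  have mono: "b n \<le> b m" if "n \<le> m" for n m
    using lift_Suc_mono_le[of b n m] inc that by (simp add: less_imp_le)
  obtain u where "\<forall>n. b n < u" using countable_bounded[of "range b"] by blast
  then have ub: "\<forall>x\<in>range b. x \<le> u" by (auto intro: less_imp_le)
  have "lub (range b) \<in> E i" if i: "i < lub (range b)" for i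
  proof -
    obtain n where n: "i < b n" using less_lubD[OF ub i] by blast
    have "\<forall>m\<ge>n. \<exists>e\<in>E i. b m < e \<and> e \<le> b (Suc m)"
    proof (intro allI impI)
      fix m assume "n \<le> m"
      then have "i \<le> b m" using n mono[of n m] by simp
      then show "\<exists>e\<in>E i. b m < e \<and> e \<le> b (Suc m)" using nxt[of "b m"] bSuc[of m] by auto
    qed
    then show ?thesis using clubD(2)[OF clubs] increasing_seq_lub(2)[of b, OF inc] by blast
  qed
  moreover have "\<beta>0 < lub (range b)" using increasing_seq_lub(1)[of b, OF inc, of 0] by (simp add: b_def)
  ultimately show ?thesis by blast
qed

lemma club_diagonal_Inter:
  fixes E :: "'l \<Rightarrow> 'l set"
  assumes clubs: "\<And>i. club (E i)"
  shows "club {\<beta>. \<forall>i<\<beta>. \<beta> \<in> E i}"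
  unfolding club_def
proof (intro conjI allI impI)
  let ?D = "{\<beta>. \<forall>i<\<beta>. \<beta> \<in> E i}"
  show "\<exists>\<beta>\<in>?D. \<beta>0 < \<beta>" for \<beta>0 using unbounded_diagonal_Inter[OF clubs] .
  fix \<gamma> assume acc: "accum_pt \<gamma> ?D"
  have "accum_pt \<gamma> (E i)" if "i < \<gamma>" for i
    unfolding accum_pt_def
  proof (intro conjI allI impI)
    show "\<exists>\<beta>\<in>E i. \<beta> < \<gamma>" using acc that unfolding accum_pt_def by blast
    fix a assume "a < \<gamma>"
    then have "max a i < \<gamma>" using that by simp
    then obtain \<beta> where "\<beta> \<in> ?D" "max a i < \<beta>" "\<beta> < \<gamma>"
      using acc unfolding accum_pt_def by blast
    then show "\<exists>\<beta>\<in>E i. a < \<beta> \<and> \<beta> < \<gamma>" by auto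
  qed
  then show "\<gamma> \<in> ?D" using clubD(2)[OF clubs] by blast
qed

section \<open>Clubs of order type \<open>\<kappa>\<close> at points of cofinality \<open>\<kappa>\<close>\<close>

lemma segment_less_kappa: "\<alpha> < \<kappa> \<Longrightarrow> |{..<\<alpha>}| <o |{..<\<kappa>}|"
  using kappa_regular unfolding regular_cardinal_below_def by blast

lemma image_segment_less_kappa: "\<alpha> < \<kappa> \<Longrightarrow> |f ` {..<\<alpha>}| <o |{..<\<kappa>}|"
  using card_of_image ordLeq_ordLess_trans segment_less_kappa by blast

lemma kappa_limit: "j < \<kappa> \<Longrightarrow> \<exists>i. j < i \<and> i < \<kappa>"
proof (rule ccontr)
  assume j: "j < \<kappa>" and "\<not> (\<exists>i. j < i \<and> i < \<kappa>)"
  then have "cofinal_in \<kappa> {j}" unfolding cofinal_in_def by (auto simp: not_less)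
  then have "|{..<\<kappa>}| \<le>o |{j}|"
    using kappa_regular ordIso_iff_ordLeq unfolding regular_cardinal_below_def by blast
  then show False using kappa_infinite card_of_ordLeq_finite by blast
qed

lemma cof_kappa_limit:
  assumes "cof_eq \<delta> \<kappa>" and "\<beta> < \<delta>"
  shows "\<exists>\<beta>'. \<beta> < \<beta>' \<and> \<beta>' < \<delta>"
proof (rule ccontr)
  assume "\<not> ?thesis"
  then have "cofinal_in \<delta> {\<beta>}" using assms(2) unfolding cofinal_in_def by (auto simp: not_less)
  then have "|{..<\<kappa>}| \<le>o |{\<beta>}|" using assms(1) unfolding cof_eq_def by blast
  then show False using kappa_infinite card_of_ordLeq_finite by blast
qed

lemma strict_mono_enumeration:
  fixes C :: "'l set"
  assumes segments: "\<And>c. c \<in> C \<Longrightarrow> |C \<inter> {..<c}| <o |{..<\<kappa>}|"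
    and large: "|{..<\<kappa>}| \<le>o |C|"
  shows "\<exists>f. bij_betw f {..<\<kappa>} C \<and> strict_mono_on {..<\<kappa>} f"
proof -
  define f :: "'l \<Rightarrow> 'l" where "f = wrec (\<lambda>P i. LEAST c. c \<in> C \<and> c \<notin> P)"
  have f_eq: "f i = (LEAST c. c \<in> C \<and> c \<notin> f ` {..<i})" for i
    unfolding f_def by (subst wrec_eq) simp
  have "\<exists>c. c \<in> C \<and> c \<notin> f ` {..<i}" if "i < \<kappa>" for i
  proof (rule ccontr)
    assume "\<not> ?thesis"
    then have "|C| \<le>o |f ` {..<i}|" by (intro card_of_mono1) blast
    then show False
      using image_segment_less_kappa[OF that] large not_ordLess_ordLeq ordLeq_transitive by blast
  qed
  then have f_in: "f i \<in> C \<and> f i \<notin> f ` {..<i}" if "i < \<kappa>" for i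
    unfolding f_eq[of i] using that by (metis (mono_tags, lifting) LeastI)
  have f_le: "f i \<le> c" if "c \<in> C" "c \<notin> f ` {..<i}" for i c
    unfolding f_eq[of i] using that by (simp add: Least_le)
  have mono: "strict_mono_on {..<\<kappa>} f"
  proof (rule strict_mono_onI)
    fix i j assume ij: "i \<in> {..<\<kappa>}" "j \<in> {..<\<kappa>}" "i < j"
    then have fj: "f j \<in> C" "f j \<notin> f ` {..<j}" using f_in[of j] by auto
    moreover have "f j \<notin> f ` {..<i}" using fj(2) ij(3) by auto
    ultimately have "f i \<le> f j" using f_le by blast
    moreover have "f i \<in> f ` {..<j}" using ij(3) by simp
    then have "f i \<noteq> f j" using fj(2) by auto
    ultimately show "f i < f j" by simp
  qed
  then have inj: "inj_on f {..<\<kappa>}" by (rule strict_mono_on_imp_inj_on)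
  have "C \<subseteq> f ` {..<\<kappa>}"
  proof
    fix c assume c: "c \<in> C"
    show "c \<in> f ` {..<\<kappa>}"
    proof (rule ccontr)
      assume c_new: "c \<notin> f ` {..<\<kappa>}"
      have "f i < c" if i: "i < \<kappa>" for i
      proof -
        have "c \<notin> f ` {..<i}" using c_new i by auto
        then have "f i \<le> c" using f_le[OF c] by blast
        moreover have "f i \<noteq> c" using c_new i by auto
        ultimately show ?thesis by simp
      qed
      then have "f ` {..<\<kappa>} \<subseteq> C \<inter> {..<c}" using f_in by auto
      then have "|{..<\<kappa>}| \<le>o |C \<inter> {..<c}|" using inj card_of_ordLeq by blast
      then show False using segments[OF c] not_ordLess_ordLeq by blast
    qed
  qed
  then have "bij_betw f {..<\<kappa>} C" using inj f_in unfolding bij_betw_def by blast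
  then show ?thesis using mono by blast
qed

text \<open>The premise \<open>\<forall>j<i. \<exists>k. j < k \<and> k < i\<close> says that \<open>i\<close> is a limit (or the least element).\<close>

lemma continuous_image_closed:
  fixes t :: "'l \<Rightarrow> 'l"
  assumes mono: "\<And>i j. i \<le> j \<Longrightarrow> j < \<kappa> \<Longrightarrow> t i \<le> t j"
    and cofinal: "\<And>\<beta>. \<beta> < \<delta> \<Longrightarrow> \<exists>i<\<kappa>. \<beta> < t i"
    and continuous: "\<And>i \<beta>. i < \<kappa> \<Longrightarrow> (\<forall>j<i. \<exists>k. j < k \<and> k < i) \<Longrightarrow> \<beta> < t i \<Longrightarrow> \<exists>j<i. \<beta> < t j"
    and "\<gamma> < \<delta>" and acc: "accum_pt \<gamma> (t ` {..<\<kappa>})"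
  shows "\<gamma> \<in> t ` {..<\<kappa>}"
proof -
  obtain i0 where "i0 < \<kappa> \<and> \<gamma> < t i0" using cofinal[OF \<open>\<gamma> < \<delta>\<close>] by blast
  define i where "i = (LEAST i. i < \<kappa> \<and> \<gamma> \<le> t i)"
  have i: "i < \<kappa>" "\<gamma> \<le> t i"
    unfolding i_def by (rule LeastI2[of _ i0], use \<open>i0 < \<kappa> \<and> \<gamma> < t i0\<close> in auto)+
  have below: "t j < \<gamma>" if "j < i" for j
    using not_less_Least[of j "\<lambda>i. i < \<kappa> \<and> \<gamma> \<le> t i"] that i(1)
    unfolding i_def[symmetric] by (auto simp: not_le)
  show ?thesis
  proof (cases "\<forall>j<i. \<exists>k. j < k \<and> k < i")
    case True
    then have "\<not> \<gamma> < t i" using continuous[OF i(1)] below less_asym by blast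
    then have "\<gamma> = t i" using i(2) by simp
    then show ?thesis using i(1) by blast
  next
    case False
    then obtain j where j: "j < i" "\<forall>k. \<not> (j < k \<and> k < i)" by blast
    obtain k where k: "k < \<kappa>" "t j < t k" "t k < \<gamma>"
      using acc below[OF j(1)] unfolding accum_pt_def by blast
    have "t k < t i" using k(3) i(2) by simp
    then have "k < i" using mono[of i k] k(1) by (auto simp: not_le[symmetric])
    then have "k \<le> j" using j(2)[rule_format, of k] by (simp add: not_less)
    then have "t k \<le> t j" using mono[of k j] j(1) i(1) by simp
    with k(2) show ?thesis by simp
  qed
qed

lemma club_of_continuous_seq:
  fixes t :: "'l \<Rightarrow> 'l"
  assumes cof: "cof_eq \<delta> \<kappa>"
    and mono: "\<And>i j. i \<le> j \<Longrightarrow> j < \<kappa> \<Longrightarrow> t i \<le> t j"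
    and bounded: "\<And>i. i < \<kappa> \<Longrightarrow> t i < \<delta>"
    and cofinal: "\<And>\<beta>. \<beta> < \<delta> \<Longrightarrow> \<exists>i<\<kappa>. \<beta> < t i"
    and continuous: "\<And>i \<beta>. i < \<kappa> \<Longrightarrow> (\<forall>j<i. \<exists>k. j < k \<and> k < i) \<Longrightarrow> \<beta> < t i \<Longrightarrow> \<exists>j<i. \<beta> < t j"
  shows "club_below \<delta> (t ` {..<\<kappa>})"
    and "\<exists>f. bij_betw f {..<\<kappa>} (t ` {..<\<kappa>}) \<and> strict_mono_on {..<\<kappa>} f"
proof -
  let ?C = "t ` {..<\<kappa>}"
  have sub: "?C \<subseteq> {..<\<delta>}" using bounded by auto
  have "unbounded_below \<delta> ?C"
    unfolding unbounded_below_def using sub cofinal by blast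
  then show "club_below \<delta> ?C"
    unfolding club_below_def using continuous_image_closed[OF mono cofinal continuous] by blast
  have "|?C \<inter> {..<c}| <o |{..<\<kappa>}|" if c: "c \<in> ?C" for c
  proof -
    obtain i where i: "i < \<kappa>" "c = t i" using c by blast
    have "?C \<inter> {..<c} \<subseteq> t ` {..<i}"
    proof
      fix x assume "x \<in> ?C \<inter> {..<c}"
      then obtain j where j: "j < \<kappa>" "x = t j" "t j < t i" using i by auto
      then have "\<not> i \<le> j" using mono[of i j] by auto
      then show "x \<in> t ` {..<i}" using j(2) by (simp add: not_le)
    qed
    then show ?thesis
      by (rule ordLeq_ordLess_trans[OF card_of_mono1 image_segment_less_kappa[OF i(1)]])
  qed
  moreover have "|{..<\<kappa>}| \<le>o |?C|"
  proof -
    have "cofinal_in \<delta> ?C"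
      unfolding cofinal_in_def
    proof (intro conjI allI impI)
      fix \<alpha> assume "\<alpha> < \<delta>"
      then obtain i where "i < \<kappa>" "\<alpha> < t i" using cofinal by blast
      then have "t i \<in> ?C" "\<alpha> \<le> t i" by auto
      then show "\<exists>\<beta>\<in>?C. \<alpha> \<le> \<beta>" by blast
    qed (rule sub)
    then show ?thesis using cof unfolding cof_eq_def by blast
  qed
  ultimately show "\<exists>f. bij_betw f {..<\<kappa>} ?C \<and> strict_mono_on {..<\<kappa>} f"
    by (rule strict_mono_enumeration)
qed

definition cof_map :: "'l \<Rightarrow> 'l \<Rightarrow> 'l" where
  "cof_map \<delta> = (SOME h. cofinal_in \<delta> (h ` {..<\<kappa>}))"

text \<open>Taking suprema of initial segments turns an arbitrary cofinal map into a monotone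
  sequence that is continuous at limits (though not necessarily strictly increasing).\<close>

definition canon_seq :: "'l \<Rightarrow> 'l \<Rightarrow> 'l" where
  "canon_seq \<delta> i = lub (cof_map \<delta> ` {..<i})"

lemma cofinal_cof_map:
  assumes "cof_eq \<delta> \<kappa>"
  shows "cofinal_in \<delta> (cof_map \<delta> ` {..<\<kappa>})"
proof -
  obtain X where X: "cofinal_in \<delta> X" "|X| =o |{..<\<kappa>}|"
    using assms unfolding cof_eq_def by blast
  then obtain h where "bij_betw h {..<\<kappa>} X"
    using card_of_ordIso ordIso_symmetric by blast
  then have "cofinal_in \<delta> (h ` {..<\<kappa>})" using X(1) by (simp add: bij_betw_def)
  then show ?thesis unfolding cof_map_def by (rule someI[where P = "\<lambda>h. cofinal_in \<delta> (h ` {..<\<kappa>})"])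
qed

context
  fixes \<delta> :: 'l
  assumes cof: "cof_eq \<delta> \<kappa>"
begin

lemma cof_map_less: "cof_map \<delta> j < \<delta>" if "j < \<kappa>"
  using cofinal_cof_map[OF cof] that unfolding cofinal_in_def by auto

lemma cof_map_bounded: "i < \<kappa> \<Longrightarrow> \<forall>x\<in>cof_map \<delta> ` {..<i}. x \<le> \<delta>"
  using cof_map_less by (auto intro: less_imp_le)

lemma canon_seq_upper: "j < i \<Longrightarrow> i < \<kappa> \<Longrightarrow> cof_map \<delta> j \<le> canon_seq \<delta> i"
  unfolding canon_seq_def by (rule lub_upper[OF cof_map_bounded]) auto

lemma canon_seq_less: "i < \<kappa> \<Longrightarrow> canon_seq \<delta> i < \<delta>"
proof -
  assume i: "i < \<kappa>"
  let ?Y = "cof_map \<delta> ` {..<i}"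
  have "\<not> cofinal_in \<delta> ?Y"
    using cof image_segment_less_kappa[OF i] not_ordLess_ordLeq unfolding cof_eq_def by blast
  moreover have "?Y \<subseteq> {..<\<delta>}" using cof_map_less i by auto
  ultimately obtain \<alpha> where "\<alpha> < \<delta>" "\<forall>\<beta>\<in>?Y. \<beta> < \<alpha>"
    unfolding cofinal_in_def by (auto simp: not_le)
  then show ?thesis
    unfolding canon_seq_def using lub_least[of ?Y \<alpha>] by (auto intro: less_imp_le le_less_trans)
qed

lemma canon_seq_mono: "i \<le> j \<Longrightarrow> j < \<kappa> \<Longrightarrow> canon_seq \<delta> i \<le> canon_seq \<delta> j"
  unfolding canon_seq_def by (rule lub_mono[OF _ cof_map_bounded]) auto

lemma canon_seq_cofinal: "\<beta> < \<delta> \<Longrightarrow> \<exists>i<\<kappa>. \<beta> < canon_seq \<delta> i"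
proof -
  assume "\<beta> < \<delta>"
  then obtain \<beta>' where "\<beta> < \<beta>'" "\<beta>' < \<delta>" using cof_kappa_limit[OF cof] by blast
  then obtain j where j: "j < \<kappa>" "\<beta>' \<le> cof_map \<delta> j"
    using cofinal_cof_map[OF cof] unfolding cofinal_in_def by blast
  obtain i where "j < i" "i < \<kappa>" using kappa_limit[OF j(1)] by blast
  then have "\<beta> < canon_seq \<delta> i"
    using \<open>\<beta> < \<beta>'\<close> j(2) canon_seq_upper by (meson less_le_trans order.trans)
  then show ?thesis using \<open>i < \<kappa>\<close> by blast
qed

lemma canon_seq_continuous:
  assumes "i < \<kappa>" and "\<forall>j<i. \<exists>k. j < k \<and> k < i" and "\<beta> < canon_seq \<delta> i"
  shows "\<exists>j<i. \<beta> < canon_seq \<delta> j"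
proof -
  obtain j where j: "j < i" "\<beta> < cof_map \<delta> j"
    using less_lubD[OF cof_map_bounded[OF assms(1)]] assms(3) unfolding canon_seq_def by blast
  obtain k where "j < k" "k < i" using assms(2) j(1) by blast
  then have "cof_map \<delta> j \<le> canon_seq \<delta> k"
    using canon_seq_upper assms(1) by (meson less_trans)
  then show ?thesis using j(2) \<open>k < i\<close> less_le_trans by blast
qed

end

lemma canonical_club:
  assumes "cof_eq \<delta> \<kappa>"
  shows "club_below \<delta> (canon_seq \<delta> ` {..<\<kappa>})"
    and "\<exists>f. bij_betw f {..<\<kappa>} (canon_seq \<delta> ` {..<\<kappa>}) \<and> strict_mono_on {..<\<kappa>} f"
  using club_of_continuous_seq[OF assms canon_seq_mono canon_seq_less canon_seq_cofinal
      canon_seq_continuous] assms by blast+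

text \<open>Where \<open>F\<close> has no element below \<open>canon_seq \<delta> i\<close>, \<open>proj_seq F \<delta> i\<close> is the junk value
  \<open>lub {}\<close>, the least element of the type.\<close>

definition proj_seq :: "'l set \<Rightarrow> 'l \<Rightarrow> 'l \<Rightarrow> 'l" where
  "proj_seq F \<delta> i = lub (F \<inter> {..<canon_seq \<delta> i})"

definition proj_club :: "'l set \<Rightarrow> 'l \<Rightarrow> 'l set" where
  "proj_club F \<delta> = proj_seq F \<delta> ` {..<\<kappa>}"

lemma proj_seq_bounded: "\<forall>x\<in>F \<inter> {..<canon_seq \<delta> i}. x \<le> canon_seq \<delta> i"
  by auto

lemma proj_seq_le: "proj_seq F \<delta> i \<le> canon_seq \<delta> i"
  unfolding proj_seq_def by (rule lub_least) auto

lemma proj_seq_antimono: "F' \<subseteq> F \<Longrightarrow> proj_seq F' \<delta> i \<le> proj_seq F \<delta> i"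
  unfolding proj_seq_def by (rule lub_mono[OF _ proj_seq_bounded]) auto

lemma proj_seq_in_club:
  assumes "club F"
  shows "proj_seq F \<delta> i \<in> F \<or> proj_seq F \<delta> i = lub {}"
proof (cases "F \<inter> {..<canon_seq \<delta> i} = {}")
  case False
  then obtain x where "x \<in> F" "x < canon_seq \<delta> i" by auto
  then show ?thesis
    unfolding proj_seq_def using lub_in_closed assms unfolding club_def by blast
qed (simp add: proj_seq_def)

lemma proj_seq_less: "cof_eq \<delta> \<kappa> \<Longrightarrow> i < \<kappa> \<Longrightarrow> proj_seq F \<delta> i < \<delta>"
  using proj_seq_le canon_seq_less by (rule le_less_trans)

lemma proj_club_subset: "cof_eq \<delta> \<kappa> \<Longrightarrow> proj_club F \<delta> \<subseteq> {..<\<delta>}"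
  unfolding proj_club_def using proj_seq_less by blast

lemma proj_club_is_club:
  assumes cof: "cof_eq \<delta> \<kappa>" and acc: "accum_pt \<delta> F"
  shows "club_below \<delta> (proj_club F \<delta>)"
    and "\<exists>f. bij_betw f {..<\<kappa>} (proj_club F \<delta>) \<and> strict_mono_on {..<\<kappa>} f"
proof -
  have mono: "proj_seq F \<delta> i \<le> proj_seq F \<delta> j" if "i \<le> j" "j < \<kappa>" for i j
    unfolding proj_seq_def
    using canon_seq_mono[OF cof that] by (intro lub_mono[OF _ proj_seq_bounded]) auto
  have cofinal: "\<exists>i<\<kappa>. \<beta> < proj_seq F \<delta> i" if \<beta>: "\<beta> < \<delta>" for \<beta>
  proof -
    obtain x where x: "x \<in> F" "\<beta> < x" "x < \<delta>" using acc \<beta> unfolding accum_pt_def by blast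
    obtain i where i: "i < \<kappa>" "x < canon_seq \<delta> i" using canon_seq_cofinal[OF cof x(3)] by blast
    have "x \<le> proj_seq F \<delta> i"
      unfolding proj_seq_def by (rule lub_upper[OF proj_seq_bounded]) (use x i in blast)
    then show ?thesis using x(2) i(1) less_le_trans by blast
  qed
  have continuous: "\<exists>j<i. \<beta> < proj_seq F \<delta> j"
    if i: "i < \<kappa>" "\<forall>j<i. \<exists>k. j < k \<and> k < i" and \<beta>: "\<beta> < proj_seq F \<delta> i" for i \<beta>
  proof -
    obtain x where x: "x \<in> F" "x < canon_seq \<delta> i" "\<beta> < x"
      using less_lubD[OF proj_seq_bounded] \<beta> unfolding proj_seq_def by blast
    obtain j where j: "j < i" "x < canon_seq \<delta> j" using canon_seq_continuous[OF cof i x(2)] by blast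
    have "x \<le> proj_seq F \<delta> j"
      unfolding proj_seq_def by (rule lub_upper[OF proj_seq_bounded]) (use x j in blast)
    then show ?thesis using x(3) j(1) less_le_trans by blast
  qed
  show "club_below \<delta> (proj_club F \<delta>)"
    and "\<exists>f. bij_betw f {..<\<kappa>} (proj_club F \<delta>) \<and> strict_mono_on {..<\<kappa>} f"
    unfolding proj_club_def
    using club_of_continuous_seq[OF cof mono proj_seq_less[OF cof] cofinal continuous] by blast+
qed

section \<open>Stabilisation below \<open>\<kappa>\<^sup>+\<close>\<close>

definition kappa_plus :: 'l where
  "kappa_plus = (LEAST \<theta>. \<not> |{..<\<theta>}| \<le>o |{..<\<kappa>}| )"

text \<open>The only use of \<open>2\<^sup>\<kappa> < \<lambda>\<close>: it puts \<open>\<kappa>\<^sup>+\<close> below \<open>\<lambda>\<close>.\<close>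

lemma kappa_plus_large: "\<not> |{..<kappa_plus}| \<le>o |{..<\<kappa>}|"
proof -
  obtain j :: "'l set \<Rightarrow> 'l" where j: "inj_on j (Pow {..<\<kappa>})"
    using pow_kappa_less_lambda ordLess_imp_ordLeq card_of_ordLeq[of "Pow {..<\<kappa>}" "UNIV :: 'l set"] by blast
  have "|j ` Pow {..<\<kappa>}| <o |UNIV :: 'l set|"
    using card_of_image pow_kappa_less_lambda by (rule ordLeq_ordLess_trans)
  then obtain \<alpha> where "j ` Pow {..<\<kappa>} \<subseteq> {..<\<alpha>}" using small_bounded by blast
  then have "|Pow {..<\<kappa>}| \<le>o |{..<\<alpha>}|" using j card_of_ordLeq by blast
  then have "\<not> |{..<\<alpha>}| \<le>o |{..<\<kappa>}|"
    using card_of_Pow ordLeq_ordLess_trans ordLess_irreflexive by metis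
  then show ?thesis unfolding kappa_plus_def by (rule LeastI)
qed

lemma less_kappa_plus_small: "\<alpha> < kappa_plus \<Longrightarrow> |{..<\<alpha>}| \<le>o |{..<\<kappa>}|"
  unfolding kappa_plus_def using not_less_Least by blast

lemma kappa_plus_bounded:
  assumes X: "X \<subseteq> {..<kappa_plus}" and small: "|X| \<le>o |{..<\<kappa>}|"
  shows "\<exists>y<kappa_plus. \<forall>x\<in>X. x < y"
proof (rule ccontr)
  assume unbounded: "\<not> ?thesis"
  have "{..<kappa_plus} \<subseteq> (\<Union>x\<in>X. {..x})"
  proof
    fix y assume "y \<in> {..<kappa_plus}"
    then obtain x where "x \<in> X" "\<not> x < y" using unbounded by auto
    then show "y \<in> (\<Union>x\<in>X. {..x})" by (auto simp: not_less)
  qed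
  then have "|{..<kappa_plus}| \<le>o |\<Union>x\<in>X. {..x}|" by (rule card_of_mono1)
  moreover have "|\<Union>x\<in>X. {..x}| \<le>o |{..<\<kappa>}|"
  proof (rule card_of_UNION_ordLeq_infinite[OF kappa_infinite small], rule ballI)
    fix x assume "x \<in> X"
    then have "|{..<x}| \<le>o |{..<\<kappa>}|" using X less_kappa_plus_small by blast
    moreover have "|{x}| \<le>o |{..<\<kappa>}|"
      using kappa_infinite by (intro card_of_singl_ordLeq) auto
    ultimately have "|{..<x} \<union> {x}| \<le>o |{..<\<kappa>}|"
      using kappa_infinite card_of_Card_order
      by (intro card_of_Un_ordLeq_infinite_Field) (auto simp: Field_card_of)
    moreover have "{..x} = {..<x} \<union> {x}" by auto
    ultimately show "|{..x}| \<le>o |{..<\<kappa>}|" by simp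
  qed
  ultimately show False using kappa_plus_large ordLeq_transitive by blast
qed

lemma kappa_plus_limit:
  assumes "y < kappa_plus"
  shows "\<exists>y'. y < y' \<and> y' < kappa_plus"
proof -
  have "|{y}| \<le>o |{..<\<kappa>}|"
    using kappa_infinite by (intro card_of_singl_ordLeq) auto
  then show ?thesis using kappa_plus_bounded[of "{y}"] assms by auto
qed

lemma kappa_plus_nonempty: "\<exists>\<zeta>. \<zeta> < kappa_plus"
proof (rule ccontr)
  assume "\<not> ?thesis"
  then have "{..<kappa_plus} = {}" by auto
  then show False using kappa_plus_large card_of_empty by metis
qed

text \<open>Each coordinate stabilises at some stage below \<open>\<kappa>\<^sup>+\<close>, and \<open>\<kappa>\<close> such stages are bounded
  below \<open>\<kappa>\<^sup>+\<close>.\<close>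

lemma antimono_family_stabilizes:
  fixes g :: "'l \<Rightarrow> 'l \<Rightarrow> 'l"
  assumes antimono: "\<And>\<zeta> \<zeta>' i. \<zeta> \<le> \<zeta>' \<Longrightarrow> \<zeta>' < kappa_plus \<Longrightarrow> g \<zeta>' i \<le> g \<zeta> i"
  shows "\<exists>y<kappa_plus. \<forall>\<zeta>. y \<le> \<zeta> \<longrightarrow> \<zeta> < kappa_plus \<longrightarrow> (\<forall>i. i < \<kappa> \<longrightarrow> g \<zeta> i = g y i)"
proof -
  define m where "m i = (LEAST v. \<exists>\<zeta><kappa_plus. v = g \<zeta> i)" for i
  obtain \<zeta>0 where "\<zeta>0 < kappa_plus" using kappa_plus_nonempty by blast
  have "\<exists>\<zeta>. \<zeta> < kappa_plus \<and> m i = g \<zeta> i" for i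
  proof -
    have "\<exists>v. \<exists>\<zeta><kappa_plus. v = g \<zeta> i" using \<open>\<zeta>0 < kappa_plus\<close> by blast
    then show ?thesis
      unfolding m_def by (rule LeastI_ex[where P = "\<lambda>v. \<exists>\<zeta><kappa_plus. v = g \<zeta> i"])
  qed
  then obtain z where z: "\<forall>i. z i < kappa_plus \<and> m i = g (z i) i"
    using choice[of "\<lambda>i \<zeta>. \<zeta> < kappa_plus \<and> m i = g \<zeta> i"] by blast
  have stable: "g \<zeta> i = m i" if "z i \<le> \<zeta>" "\<zeta> < kappa_plus" for i \<zeta>
  proof (rule antisym)
    show "g \<zeta> i \<le> m i" using antimono[OF that] z by simp
    show "m i \<le> g \<zeta> i" unfolding m_def using that(2) by (blast intro: Least_le)
  qed
  have "z ` {..<\<kappa>} \<subseteq> {..<kappa_plus}" using z by auto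
  then obtain y where y: "y < kappa_plus" "\<forall>x\<in>z ` {..<\<kappa>}. x < y"
    using kappa_plus_bounded[OF _ card_of_image] by blast
  have "g \<zeta> i = g y i" if "y \<le> \<zeta>" "\<zeta> < kappa_plus" "i < \<kappa>" for \<zeta> i
  proof -
    have "z i \<le> y" using y(2) that(3) by (auto intro: less_imp_le)
    then have "z i \<le> \<zeta>" using that(1) by (rule order.trans)
    then show ?thesis using stable \<open>z i \<le> y\<close> y(1) that(2) by simp
  qed
  then show ?thesis using y(1) by blast
qed

end

section \<open>Normal and saturated ideals\<close>

locale normal_ideal_setting = cardinal_setting \<kappa> for \<kappa> :: "'l::wellorder" +
  fixes I :: "'l set set"
  assumes normal: "normal_ideal I"
begin

lemma ideal_empty: "{} \<in> I"
  using normal unfolding normal_ideal_def by blast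

lemma ideal_downward_closed: "A \<in> I \<Longrightarrow> B \<subseteq> A \<Longrightarrow> B \<in> I"
  using normal unfolding normal_ideal_def by blast

lemma ideal_Un: "A \<in> I \<Longrightarrow> B \<in> I \<Longrightarrow> A \<union> B \<in> I"
  using normal unfolding normal_ideal_def by blast

lemma ideal_atMost: "{..\<alpha>} \<in> I"
proof -
  obtain \<beta> where "\<alpha> < \<beta>" using gt_ex by blast
  then have "{..\<alpha>} \<subseteq> {..<\<beta>}" by auto
  moreover have "{..<\<beta>} \<in> I" using normal unfolding normal_ideal_def by blast
  ultimately show ?thesis using ideal_downward_closed by blast
qed

lemma ideal_diagonal_Union: "(\<And>\<alpha>. A \<alpha> \<in> I) \<Longrightarrow> {\<beta>. \<exists>\<alpha><\<beta>. \<beta> \<in> A \<alpha>} \<in> I"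
  using normal unfolding normal_ideal_def by blast

lemma ideal_UN_lessThan:
  fixes Y :: "'l \<Rightarrow> 'l set"
  assumes "\<And>\<zeta>. \<zeta> < \<alpha> \<Longrightarrow> Y \<zeta> \<in> I"
  shows "(\<Union>\<zeta>\<in>{..<\<alpha>}. Y \<zeta>) \<in> I"
proof -
  define A where "A \<zeta> = (if \<zeta> < \<alpha> then Y \<zeta> else {})" for \<zeta>
  have "A \<zeta> \<in> I" for \<zeta>
    unfolding A_def using assms ideal_empty by simp
  then have "{\<beta>. \<exists>\<zeta><\<beta>. \<beta> \<in> A \<zeta>} \<union> {..\<alpha>} \<in> I"
    by (intro ideal_Un ideal_diagonal_Union ideal_atMost)
  moreover have "(\<Union>\<zeta>\<in>{..<\<alpha>}. Y \<zeta>) \<subseteq> {\<beta>. \<exists>\<zeta><\<beta>. \<beta> \<in> A \<zeta>} \<union> {..\<alpha>}"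
    unfolding A_def by (force simp: not_less)
  ultimately show ?thesis using ideal_downward_closed by blast
qed

lemma nonaccum_pts_in_ideal:
  assumes E: "club E"
  shows "{\<beta>. \<not> accum_pt \<beta> E} \<in> I"
proof -
  define A where "A a = {\<beta>. a < \<beta> \<and> (\<forall>e\<in>E. \<not> (a < e \<and> e < \<beta>))}" for a
  have "A a \<in> I" for a
  proof -
    obtain m where "m \<in> E" "a < m" using clubD(1)[OF E] by blast
    then have "A a \<subseteq> {..m}" unfolding A_def by (auto simp: not_less)
    then show ?thesis using ideal_atMost ideal_downward_closed by blast
  qed
  obtain e0 where e0: "e0 \<in> E" using clubD(1)[OF E] by blast
  have "{\<beta>. \<not> accum_pt \<beta> E} \<subseteq> {\<beta>. \<exists>a<\<beta>. \<beta> \<in> A a} \<union> {..e0}"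
  proof
    fix \<beta> assume "\<beta> \<in> {\<beta>. \<not> accum_pt \<beta> E}"
    then have "\<not> (\<forall>a<\<beta>. \<exists>e\<in>E. a < e \<and> e < \<beta>)" if "e0 < \<beta>"
      using e0 that unfolding accum_pt_def by blast
    then show "\<beta> \<in> {\<beta>. \<exists>a<\<beta>. \<beta> \<in> A a} \<union> {..e0}"
      unfolding A_def by (cases "e0 < \<beta>") (auto simp: not_less)
  qed
  moreover have "{\<beta>. \<exists>a<\<beta>. \<beta> \<in> A a} \<union> {..e0} \<in> I"
    by (intro ideal_Un ideal_diagonal_Union ideal_atMost) fact
  ultimately show ?thesis using ideal_downward_closed by blast
qed

end

lemma maximal_antichain:
  fixes I :: "'a set set" and Q :: "'a set \<Rightarrow> bool"
  obtains M where "\<forall>X\<in>M. X \<notin> I \<and> Q X" and "\<forall>X\<in>M. \<forall>Y\<in>M. X \<noteq> Y \<longrightarrow> X \<inter> Y \<in> I"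
    and "\<forall>Y. Y \<notin> I \<longrightarrow> Q Y \<longrightarrow> (\<forall>X\<in>M. X \<inter> Y \<in> I) \<longrightarrow> Y \<in> M"
proof -
  define P where "P = {M. (\<forall>X\<in>M. X \<notin> I \<and> Q X) \<and> (\<forall>X\<in>M. \<forall>Y\<in>M. X \<noteq> Y \<longrightarrow> X \<inter> Y \<in> I)}"
  have "\<Union>C \<in> P" if C: "C \<in> chains P" for C
  proof -
    have CP: "\<forall>M\<in>C. (\<forall>X\<in>M. X \<notin> I \<and> Q X) \<and> (\<forall>X\<in>M. \<forall>Y\<in>M. X \<noteq> Y \<longrightarrow> X \<inter> Y \<in> I)"
      using chainsD2[OF C] unfolding P_def by blast
    have "\<exists>M\<in>C. X \<in> M \<and> Y \<in> M" if "X \<in> M1" "M1 \<in> C" "Y \<in> M2" "M2 \<in> C" for X Y M1 M2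
      using chainsD[OF C that(2,4)] that by blast
    then have "X \<inter> Y \<in> I" if "X \<in> \<Union>C" "Y \<in> \<Union>C" "X \<noteq> Y" for X Y
      using that CP by (metis UnionE)
    then show ?thesis using CP unfolding P_def by blast
  qed
  then obtain M where M: "M \<in> P" and max: "\<forall>M'\<in>P. M \<subseteq> M' \<longrightarrow> M' = M"
    using Zorn_Lemma by blast
  have "\<forall>Y. Y \<notin> I \<longrightarrow> Q Y \<longrightarrow> (\<forall>X\<in>M. X \<inter> Y \<in> I) \<longrightarrow> Y \<in> M"
  proof (intro allI impI)
    fix Y assume "Y \<notin> I" "Q Y" "\<forall>X\<in>M. X \<inter> Y \<in> I"
    then have "insert Y M \<in> P" using M unfolding P_def by (auto simp: Int_commute)
    then show "Y \<in> M" using max by blast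
  qed
  moreover have "\<forall>X\<in>M. X \<notin> I \<and> Q X" "\<forall>X\<in>M. \<forall>Y\<in>M. X \<noteq> Y \<longrightarrow> X \<inter> Y \<in> I"
    using M unfolding P_def by blast+
  ultimately show ?thesis using that by blast
qed

locale saturated_ideal_setting = normal_ideal_setting \<kappa> I for \<kappa> :: "'l::wellorder" and I +
  assumes saturated: "saturated_succ I"
begin

text \<open>Saturation turns the ideal-theoretic maximality problem into a \<open>\<lambda>\<close>-indexed one: a
  maximal \<open>I\<close>-antichain below the sets \<open>B D\<close> has at most \<open>\<lambda>\<close> members, and the hypothesis
  combines their \<open>\<lambda>\<close> witnessing clubs into one.\<close>

lemma maximal_club_mod_ideal:
  fixes B :: "'l set \<Rightarrow> 'l set"
  assumes combine: "\<And>E :: 'l \<Rightarrow> 'l set. (\<forall>i. club (E i)) \<Longrightarrow> \<exists>E0. club E0 \<and> (\<forall>i. B (E i) - B E0 \<in> I)"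
  shows "\<exists>E. club E \<and> (\<forall>D. club D \<longrightarrow> B D - B E \<in> I)"
proof -
  obtain M where M_pos: "\<forall>X\<in>M. X \<notin> I \<and> (\<exists>D. club D \<and> X \<subseteq> B D)"
    and M_disj: "\<forall>X\<in>M. \<forall>Y\<in>M. X \<noteq> Y \<longrightarrow> X \<inter> Y \<in> I"
    and M_max: "\<forall>Y. Y \<notin> I \<longrightarrow> (\<exists>D. club D \<and> Y \<subseteq> B D) \<longrightarrow> (\<forall>X\<in>M. X \<inter> Y \<in> I) \<longrightarrow> Y \<in> M"
    by (rule maximal_antichain[of I "\<lambda>X. \<exists>D. club D \<and> X \<subseteq> B D"])
  have "\<forall>X\<in>M. X \<notin> I" using M_pos by blast
  then have "|M| \<le>o |UNIV :: 'l set|"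
    using saturated M_disj unfolding saturated_succ_def by blast
  then obtain g :: "'l set \<Rightarrow> 'l" where g: "inj_on g M"
    unfolding card_of_ordLeq[symmetric] by blast
  define D_of where "D_of X = (SOME D. club D \<and> X \<subseteq> B D)" for X
  have D_of: "club (D_of X) \<and> X \<subseteq> B (D_of X)" if "X \<in> M" for X
    unfolding D_of_def by (rule someI_ex) (use M_pos that in blast)
  define E where "E i = (if i \<in> g ` M then D_of (inv_into M g i) else UNIV)" for i
  have "club (E i)" for i
  proof (cases "i \<in> g ` M")
    case True
    then have "inv_into M g i \<in> M" by (rule inv_into_into)
    then show ?thesis unfolding E_def using True D_of by simp
  qed (simp add: E_def club_UNIV)
  then obtain E0 where E0: "club E0" "\<forall>i. B (E i) - B E0 \<in> I" using combine[of E] by blast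
  have small: "X - B E0 \<in> I" if X: "X \<in> M" for X
  proof -
    have "E (g X) = D_of X" unfolding E_def using X g by simp
    then have "X - B E0 \<subseteq> B (E (g X)) - B E0" using D_of[OF X] by auto
    then show ?thesis using E0(2) ideal_downward_closed by blast
  qed
  have "B D - B E0 \<in> I" if D: "club D" for D
  proof (rule ccontr)
    assume Y_pos: "B D - B E0 \<notin> I"
    have "\<forall>X\<in>M. X \<inter> (B D - B E0) \<in> I"
      using small ideal_downward_closed by blast
    moreover have "\<exists>D'. club D' \<and> B D - B E0 \<subseteq> B D'" using D by blast
    ultimately have "B D - B E0 \<in> M" using M_max Y_pos by blast
    then have "B D - B E0 - B E0 \<in> I" by (rule small)
    then show False using Y_pos by (simp add: Diff_idemp)
  qed
  then show ?thesis using E0(1) by blast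
qed

section \<open>The guessing clubs\<close>

definition escapes :: "'l set \<Rightarrow> 'l set \<Rightarrow> 'l set \<Rightarrow> 'l set" where
  "escapes S D F = {\<delta>\<in>S. unbounded_below \<delta> (proj_club F \<delta> - D)}"

lemma escapes_diagonal_Inter:
  fixes E :: "'l \<Rightarrow> 'l set"
  assumes S: "S \<subseteq> {\<delta>. cof_eq \<delta> \<kappa>}" and clubs: "\<forall>i. club (E i)"
  shows "\<exists>E0. club E0 \<and> (\<forall>i. escapes S (E i) F - escapes S E0 F \<in> I)"
proof -
  let ?E0 = "{\<beta>. \<forall>i<\<beta>. \<beta> \<in> E i}"
  have "escapes S (E i) F - escapes S ?E0 F \<subseteq> {..i}" for i
  proof
    fix \<delta> assume \<delta>: "\<delta> \<in> escapes S (E i) F - escapes S ?E0 F"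
    show "\<delta> \<in> {..i}"
    proof (rule ccontr)
      assume "\<delta> \<notin> {..i}"
      then have "i < \<delta>" by simp
      have "\<delta> \<in> S" and escape: "unbounded_below \<delta> (proj_club F \<delta> - E i)"
        using \<delta> unfolding escapes_def by auto
      then have "proj_club F \<delta> \<subseteq> {..<\<delta>}" using S proj_club_subset by blast
      moreover have "\<exists>\<beta>\<in>proj_club F \<delta> - ?E0. \<alpha> < \<beta>" if "\<alpha> < \<delta>" for \<alpha>
      proof -
        have "max \<alpha> i < \<delta>" using that \<open>i < \<delta>\<close> by simp
        then obtain \<beta> where "\<beta> \<in> proj_club F \<delta> - E i" "max \<alpha> i < \<beta>"
          using escape unfolding unbounded_below_def by blast
        then show ?thesis by auto
      qed
      ultimately have "unbounded_below \<delta> (proj_club F \<delta> - ?E0)"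
        unfolding unbounded_below_def by blast
      then have "\<delta> \<in> escapes S ?E0 F" using \<open>\<delta> \<in> S\<close> unfolding escapes_def by blast
      then show False using \<delta> by blast
    qed
  qed
  then have "escapes S (E i) F - escapes S ?E0 F \<in> I" for i
    using ideal_atMost ideal_downward_closed by blast
  moreover have "club ?E0" using clubs by (intro club_diagonal_Inter) blast
  ultimately show ?thesis by blast
qed

definition max_escape_club :: "'l set \<Rightarrow> 'l set \<Rightarrow> 'l set" where
  "max_escape_club S F = (SOME E. club E \<and> (\<forall>D. club D \<longrightarrow> escapes S D F - escapes S E F \<in> I))"

lemma max_escape_club:
  assumes "S \<subseteq> {\<delta>. cof_eq \<delta> \<kappa>}"
  shows "club (max_escape_club S F)"
    and "club D \<Longrightarrow> escapes S D F - escapes S (max_escape_club S F) F \<in> I"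
proof -
  have "\<exists>E. club E \<and> (\<forall>D. club D \<longrightarrow> escapes S D F - escapes S E F \<in> I)"
    by (rule maximal_club_mod_ideal) (rule escapes_diagonal_Inter[OF assms])
  then have "club (max_escape_club S F) \<and>
      (\<forall>D. club D \<longrightarrow> escapes S D F - escapes S (max_escape_club S F) F \<in> I)"
    unfolding max_escape_club_def by (rule someI_ex)
  then show "club (max_escape_club S F)"
    and "club D \<Longrightarrow> escapes S D F - escapes S (max_escape_club S F) F \<in> I" by blast+
qed

definition E_seq :: "'l set \<Rightarrow> 'l \<Rightarrow> 'l set" where
  "E_seq S = wrec (\<lambda>P \<zeta>. max_escape_club S (\<Inter>P))"

definition F_seq :: "'l set \<Rightarrow> 'l \<Rightarrow> 'l set" where
  "F_seq S \<zeta> = \<Inter>(E_seq S ` {..<\<zeta>})"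

lemma E_seq_eq: "E_seq S \<zeta> = max_escape_club S (F_seq S \<zeta>)"
  unfolding F_seq_def E_seq_def by (subst wrec_eq) simp

lemma F_seq_antimono: "\<zeta> \<le> \<zeta>' \<Longrightarrow> F_seq S \<zeta>' \<subseteq> F_seq S \<zeta>"
  unfolding F_seq_def by (auto dest: less_le_trans)

lemma F_seq_subset_E_seq: "\<zeta> < \<zeta>' \<Longrightarrow> F_seq S \<zeta>' \<subseteq> E_seq S \<zeta>"
  unfolding F_seq_def by auto

definition stable_stage :: "'l set \<Rightarrow> 'l \<Rightarrow> 'l" where
  "stable_stage S \<delta> = (SOME y. y < kappa_plus \<and>
     (\<exists>y'. y < y' \<and> y' < kappa_plus \<and> proj_club (F_seq S y') \<delta> = proj_club (F_seq S y) \<delta>))"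

text \<open>At points \<open>\<delta>\<close> that are not limits of \<open>F\<^sub>\<kappa>\<^sub>+\<close> (an \<open>I\<close>-small set) any club of order type
  \<open>\<kappa>\<close> will do.\<close>

definition guessing_club :: "'l set \<Rightarrow> 'l \<Rightarrow> 'l set" where
  "guessing_club S \<delta> =
     (if accum_pt \<delta> (F_seq S kappa_plus) then proj_club (F_seq S (stable_stage S \<delta>)) \<delta>
      else canon_seq \<delta> ` {..<\<kappa>})"

context
  fixes S :: "'l set"
  assumes S: "S \<subseteq> {\<delta>. cof_eq \<delta> \<kappa>}"
begin

lemma club_E_seq: "club (E_seq S \<zeta>)"
  using max_escape_club(1)[OF S] by (simp add: E_seq_eq)

lemma club_F_seq: "club (F_seq S \<zeta>)"
  unfolding F_seq_def using club_E_seq by (intro club_INT_lessThan)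

lemma proj_club_stabilizes:
  "\<exists>y<kappa_plus. \<exists>y'. y < y' \<and> y' < kappa_plus \<and> proj_club (F_seq S y') \<delta> = proj_club (F_seq S y) \<delta>"
proof -
  have "\<exists>y<kappa_plus. \<forall>\<zeta>. y \<le> \<zeta> \<longrightarrow> \<zeta> < kappa_plus \<longrightarrow>
      (\<forall>i. i < \<kappa> \<longrightarrow> proj_seq (F_seq S \<zeta>) \<delta> i = proj_seq (F_seq S y) \<delta> i)"
    by (rule antimono_family_stabilizes) (rule proj_seq_antimono[OF F_seq_antimono])
  then obtain y where y: "y < kappa_plus" and stable: "\<forall>\<zeta>. y \<le> \<zeta> \<longrightarrow> \<zeta> < kappa_plus \<longrightarrow>
      (\<forall>i. i < \<kappa> \<longrightarrow> proj_seq (F_seq S \<zeta>) \<delta> i = proj_seq (F_seq S y) \<delta> i)"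
    by blast
  obtain y' where y': "y < y'" "y' < kappa_plus" using kappa_plus_limit[OF y] by blast
  have "proj_seq (F_seq S y') \<delta> i = proj_seq (F_seq S y) \<delta> i" if "i < \<kappa>" for i
    using stable[rule_format, OF less_imp_le[OF y'(1)] y'(2) that] .
  then have "proj_club (F_seq S y') \<delta> = proj_club (F_seq S y) \<delta>"
    unfolding proj_club_def by (intro image_cong) simp_all
  then show ?thesis using y y' by blast
qed

text \<open>Once the projection into \<open>F\<^sub>y\<close> is also a projection into some later \<open>F\<^sub>y\<^sub>'\<close>, it lies
  inside \<open>E\<^sub>y\<close> apart from the junk value \<open>lub {}\<close>, so it does not escape \<open>E\<^sub>y\<close>.\<close>

lemma stable_proj_club_not_escapes:
  assumes "y < y'" and stable: "proj_club (F_seq S y') \<delta> = proj_club (F_seq S y) \<delta>"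
    and "lub {} < \<delta>"
  shows "\<delta> \<notin> escapes S (E_seq S y) (F_seq S y)"
proof
  have "proj_club (F_seq S y) \<delta> - E_seq S y \<subseteq> {lub {}}"
  proof
    fix x assume x: "x \<in> proj_club (F_seq S y) \<delta> - E_seq S y"
    then have "x \<in> proj_club (F_seq S y') \<delta>" using stable by simp
    then obtain i where "x = proj_seq (F_seq S y') \<delta> i" unfolding proj_club_def by blast
    then have "x \<in> F_seq S y' \<or> x = lub {}" using proj_seq_in_club[OF club_F_seq] by simp
    then show "x \<in> {lub {}}" using x F_seq_subset_E_seq[OF \<open>y < y'\<close>] by blast
  qed
  moreover assume "\<delta> \<in> escapes S (E_seq S y) (F_seq S y)"
  then obtain x where "x \<in> proj_club (F_seq S y) \<delta> - E_seq S y" "lub {} < x"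
    using \<open>lub {} < \<delta>\<close> unfolding escapes_def unbounded_below_def by blast
  ultimately show False by blast
qed

lemma stable_stage:
  "stable_stage S \<delta> < kappa_plus"
  "\<exists>y'. stable_stage S \<delta> < y' \<and> y' < kappa_plus \<and>
     proj_club (F_seq S y') \<delta> = proj_club (F_seq S (stable_stage S \<delta>)) \<delta>"
  using someI_ex[OF proj_club_stabilizes] unfolding stable_stage_def by blast+

lemma guessing_club_is_club:
  assumes "\<delta> \<in> S"
  shows "club_below \<delta> (guessing_club S \<delta>)"
    and "\<exists>f. bij_betw f {..<\<kappa>} (guessing_club S \<delta>) \<and> strict_mono_on {..<\<kappa>} f"
proof -
  have cof: "cof_eq \<delta> \<kappa>" using assms S by blast
  have "F_seq S kappa_plus \<subseteq> F_seq S (stable_stage S \<delta>)"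
    using F_seq_antimono stable_stage(1) less_imp_le by blast
  then have "accum_pt \<delta> (F_seq S kappa_plus) \<Longrightarrow> accum_pt \<delta> (F_seq S (stable_stage S \<delta>))"
    by (rule accum_pt_mono)
  then show "club_below \<delta> (guessing_club S \<delta>)"
    and "\<exists>f. bij_betw f {..<\<kappa>} (guessing_club S \<delta>) \<and> strict_mono_on {..<\<kappa>} f"
    unfolding guessing_club_def using proj_club_is_club[OF cof] canonical_club[OF cof] by auto
qed

lemma guessing_club_guesses:
  assumes C: "club C"
  shows "{\<delta>\<in>S. unbounded_below \<delta> (guessing_club S \<delta> - C)} \<in> I"
proof -
  let ?Es = "F_seq S kappa_plus"
  let ?U = "\<Union>\<zeta>\<in>{..<kappa_plus}. escapes S C (F_seq S \<zeta>) - escapes S (E_seq S \<zeta>) (F_seq S \<zeta>)"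
  have "\<delta> \<in> ?U" if \<delta>: "\<delta> \<in> S" "unbounded_below \<delta> (guessing_club S \<delta> - C)"
    and acc: "accum_pt \<delta> ?Es" for \<delta>
  proof -
    let ?y = "stable_stage S \<delta>"
    have "\<delta> \<in> escapes S C (F_seq S ?y)"
      using \<delta> acc unfolding escapes_def guessing_club_def by simp
    moreover have "lub {} < \<delta>"
      using acc lub_empty_le le_less_trans unfolding accum_pt_def by blast
    then have "\<delta> \<notin> escapes S (E_seq S ?y) (F_seq S ?y)"
      using stable_stage(2) stable_proj_club_not_escapes by blast
    ultimately show ?thesis using stable_stage(1) by blast
  qed
  then have "{\<delta>\<in>S. unbounded_below \<delta> (guessing_club S \<delta> - C)} \<subseteq> {\<beta>. \<not> accum_pt \<beta> ?Es} \<union> ?U"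
    by blast
  moreover have "{\<beta>. \<not> accum_pt \<beta> ?Es} \<union> ?U \<in> I"
  proof (rule ideal_Un)
    show "{\<beta>. \<not> accum_pt \<beta> ?Es} \<in> I" by (rule nonaccum_pts_in_ideal[OF club_F_seq])
    show "?U \<in> I"
      using max_escape_club(2)[OF S C] by (intro ideal_UN_lessThan) (simp add: E_seq_eq)
  qed
  ultimately show ?thesis using ideal_downward_closed by blast
qed

end

end

theorem fact3p5:
  fixes \<kappa> :: "'l::wellorder" and S :: "'l set" and I :: "'l set set"
  assumes lam_reg: "regular_cardinal_type TYPE('l)"
    and kap_reg: "regular_cardinal_below \<kappa>"
    and kap_unc: "\<not> countable {..<\<kappa>}"
    and lam_big: "(card_of (Pow {..<\<kappa>}), card_of (UNIV :: 'l set)) \<in> ordLess"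
    and S_cof: "S \<subseteq> {\<delta>. cof_eq \<delta> \<kappa>}"
    and S_stat: "stationary S"
    and I_normal: "normal_ideal I"
    and S_pos: "S \<notin> I"
    and I_sat: "saturated_succ I"
  shows "\<exists>Cs :: 'l \<Rightarrow> 'l set.
           (\<forall>\<delta>\<in>S. club_below \<delta> (Cs \<delta>) \<and>
                  (\<exists>f. bij_betw f {..<\<kappa>} (Cs \<delta>) \<and> strict_mono_on {..<\<kappa>} f)) \<and>
           (\<forall>C. club C \<longrightarrow> {\<delta>\<in>S. unbounded_below \<delta> (Cs \<delta> - C)} \<in> I)"
proof -
  interpret saturated_ideal_setting \<kappa> I
    using lam_reg kap_reg kap_unc lam_big I_normal I_sat
    by unfold_locales simp_all
  show ?thesis
    using guessing_club_is_club[OF S_cof] guessing_club_guesses[OF S_cof] by blast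
qed

end
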